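(* Let $\Delta$ be a closed pure simplicial complex of dimension $m-1\ge2$ whose clique decomposition $\Delta=\Delta_1\cup\cdots\cup\Delta_r$ satisfies conditions (i) and (ii) below, and let $G_\Delta$ be its graph. Then each vertex $v_i$ of $G_\Delta$ has degree at most $\min\{|V(\Delta_i)|,\,2\dim\Delta\}$.
   Context: $\Delta$ is a pure $(m-1)$-dimensional simplicial complex on $[n]$. Clique decomposition: let $\mathcal{S}$ be the set of simplices $\Gamma$ with vertices in $[n]$, $\dim\Gamma\ge m-1$, whose $(m-1)$-skeleton is contained in $\Delta$; the maximal elements $\Gamma_1,\dots,\Gamma_r$ of $\mathcal{S}$ give the cliques $\Delta_i=\Gamma_i^{(m-1)}$, $\Delta=\Delta_1\cup\cdots\cup\Delta_r$; $V(\Delta_i)$ is the vertex set of $\Delta_i$. Conditions: (i) $|V(\Delta_i)\cap V(\Delta_j)|\le1$ for all $i<j$; (ii) $V(\Delta_i)\cap V(\Delta_j)\cap V(\Delta_k)=\emptyset$ for all $i<j<k$. For such $\Delta$, $G_\Delta$ is the simple graph on vertices $v_1,\dots,v_r$ with an edge $\{v_i,v_j\}$ ($i\ne j$) iff $V(\Delta_i)\cap V(\Delta_j)\ne\emptyset$. $\Delta$ is closed with respect to a labeling of its vertices by $[n]$ if for any two facets $F=\{a_1<\dots<a_m\}$, $G=\{b_1<\dots<b_m\}$ with $a_i=b_i$ for some $i$, every $m$-subset of $F\cup G$ is a facet of $\Delta$; $\Delta$ is closed if some labeling makes it closed. *)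

theory Defs
  imports Main
begin

definition simplicial_complex :: "nat \<Rightarrow> nat set set \<Rightarrow> bool" where
  "simplicial_complex n K \<longleftrightarrow> K \<subseteq> Pow {1..n} \<and> (\<forall>F\<in>K. \<forall>G. G \<subseteq> F \<longrightarrow> G \<in> K)"

definition facets :: "nat set set \<Rightarrow> nat set set" where
  "facets K = {F \<in> K. \<forall>G\<in>K. F \<subseteq> G \<longrightarrow> G = F}"

(* pure of dimension m-1: nonempty, every facet has exactly m vertices *)
definition pure_of_dim :: "nat \<Rightarrow> nat set set \<Rightarrow> bool" where
  "pure_of_dim m K \<longleftrightarrow> facets K \<noteq> {} \<and> (\<forall>F\<in>facets K. card F = m)"

definition closed_wrt_labeling :: "nat \<Rightarrow> nat set set \<Rightarrow> bool" where
  "closed_wrt_labeling m K \<longleftrightarrow>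
     (\<forall>F\<in>facets K. \<forall>G\<in>facets K.
        (\<exists>i<m. sorted_list_of_set F ! i = sorted_list_of_set G ! i) \<longrightarrow>
        (\<forall>H. H \<subseteq> F \<union> G \<and> card H = m \<longrightarrow> H \<in> facets K))"

definition closed_complex :: "nat \<Rightarrow> nat \<Rightarrow> nat set set \<Rightarrow> bool" where
  "closed_complex n m K \<longleftrightarrow>
     (\<exists>\<pi>. bij_betw \<pi> {1..n} {1..n} \<and> closed_wrt_labeling m ((\<lambda>F. \<pi> ` F) ` K))"

(* the set S: simplices on [n] of dimension \<ge> m-1 whose (m-1)-skeleton lies in K *)
definition clique_candidates :: "nat \<Rightarrow> nat \<Rightarrow> nat set set \<Rightarrow> nat set set" where
  "clique_candidates n m K =
     {\<Gamma>. \<Gamma> \<subseteq> {1..n} \<and> card \<Gamma> \<ge> m \<and> (\<forall>\<sigma>. \<sigma> \<subseteq> \<Gamma> \<and> card \<sigma> \<le> m \<longrightarrow> \<sigma> \<in> K)}"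

(* maximal elements \<Gamma>_1..\<Gamma>_r of S; V(\<Delta>_i) = \<Gamma>_i *)
definition cliques :: "nat \<Rightarrow> nat \<Rightarrow> nat set set \<Rightarrow> nat set set" where
  "cliques n m K = {\<Gamma> \<in> clique_candidates n m K.
      \<forall>\<Gamma>'\<in>clique_candidates n m K. \<Gamma> \<subseteq> \<Gamma>' \<longrightarrow> \<Gamma>' = \<Gamma>}"

(* degree of the vertex of G_\<Delta> corresponding to the clique \<Gamma> *)
definition clique_graph_degree :: "nat \<Rightarrow> nat \<Rightarrow> nat set set \<Rightarrow> nat set \<Rightarrow> nat" where
  "clique_graph_degree n m K \<Gamma> = card {\<Gamma>' \<in> cliques n m K. \<Gamma>' \<noteq> \<Gamma> \<and> \<Gamma> \<inter> \<Gamma>' \<noteq> {}}"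

end

theory Submission
  imports Defs
begin

(* Fix a relabelling pi that makes Delta closed, a clique Gamma with k = |Gamma| vertices,
   and order Gamma by pi; label_rank pi Gamma x is the position of x in this order.
   The heart of the proof: a vertex x that Gamma shares with another clique Gamma' has
   position < m-1 or > k-m in Gamma.  Otherwise pick an m-face G of Gamma' through x,
   with x at position p < m of G; since x is far from both ends of Gamma there is an
   m-face F of Gamma with x at the same position p.  Closedness makes every m-subset of
   F u G a facet, so F u G lies in a single clique D; by condition (i) D shares at most
   one vertex with any other clique, hence D = Gamma and D = Gamma', a contradiction.
   Counting: at most 2(m-1) positions are extreme, so at most 2(m-1) (and trivially at
   most k) vertices of Gamma are shared; by condition (ii) distinct neighbours of Gamma
   meet Gamma in distinct vertices, so the degree is bounded by the number of shared
   vertices. *)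

lemma sorted_list_of_set_nth_rank:
  fixes A :: "'a::linorder set"
  assumes "finite A" "x \<in> A"
  shows "sorted_list_of_set A ! card {y\<in>A. y < x} = x"
proof -
  let ?xs = "sorted_list_of_set A"
  have strict: "sorted_wrt (<) ?xs" and set_xs: "set ?xs = A" and "distinct ?xs"
    using assms(1) by simp_all
  obtain j where j: "j < length ?xs" "?xs ! j = x"
    using assms set_xs by (metis in_set_conv_nth)
  have below: "{y\<in>A. y < x} = (!) ?xs ` {..<j}"
  proof
    show "{y\<in>A. y < x} \<subseteq> (!) ?xs ` {..<j}"
    proof
      fix y assume "y \<in> {y\<in>A. y < x}"
      then have "y \<in> A" "y < x" by auto
      then obtain i where i: "i < length ?xs" "?xs ! i = y"
        using set_xs by (metis in_set_conv_nth)
      have "i < j"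
      proof (rule ccontr)
        assume "\<not> i < j"
        then have "x \<le> y" using sorted_nth_mono[OF sorted_sorted_list_of_set, of j i A] i j by simp
        then show False using \<open>y < x\<close> by simp
      qed
      then show "y \<in> (!) ?xs ` {..<j}" using i by auto
    qed
    show "(!) ?xs ` {..<j} \<subseteq> {y\<in>A. y < x}"
      using j set_xs sorted_wrt_nth_less[OF strict, of _ j] by fastforce
  qed
  have "inj_on ((!) ?xs) {..<j}"
    using \<open>distinct ?xs\<close> j(1) by (auto simp: inj_on_def nth_eq_iff_index_eq)
  then have "card {y\<in>A. y < x} = j" unfolding below by (simp add: card_image)
  then show ?thesis using j(2) by simp
qed

definition label_rank :: "(nat \<Rightarrow> nat) \<Rightarrow> nat set \<Rightarrow> nat \<Rightarrow> nat" where
  "label_rank \<pi> A x = card {y\<in>A. \<pi> y < \<pi> x}"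

(* Under an injective labelling, label_rank is the position of pi x in the sorted list of
   labels; this is how positions enter the definition of closedness. *)
lemma sorted_relabelled_nth_rank:
  assumes "finite A" "inj_on \<pi> A" "x \<in> A"
  shows "sorted_list_of_set (\<pi> ` A) ! label_rank \<pi> A x = \<pi> x"
proof -
  have "{z\<in>\<pi> ` A. z < \<pi> x} = \<pi> ` {y\<in>A. \<pi> y < \<pi> x}" by auto
  moreover have "inj_on \<pi> {y\<in>A. \<pi> y < \<pi> x}" using assms(2) by (rule inj_on_subset) auto
  ultimately have "card {z\<in>\<pi> ` A. z < \<pi> x} = label_rank \<pi> A x"
    unfolding label_rank_def by (simp add: card_image)
  then show ?thesis
    using sorted_list_of_set_nth_rank[of "\<pi> ` A" "\<pi> x"] assms by simp
qed

lemma label_rank_split: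
  assumes "finite A" "inj_on \<pi> A" "x \<in> A"
  shows "card A = label_rank \<pi> A x + Suc (card {y\<in>A. \<pi> x < \<pi> y})"
proof -
  let ?L = "{y\<in>A. \<pi> y < \<pi> x}" and ?U = "{y\<in>A. \<pi> x < \<pi> y}"
  have "A = ?L \<union> insert x ?U"
    using assms(2,3) by (auto simp: inj_on_def) (metis linorder_neqE_nat)
  then have "card A = card (?L \<union> insert x ?U)" by simp
  also have "\<dots> = card ?L + Suc (card ?U)"
    using assms(1) by (subst card_Un_disjoint) auto
  finally show ?thesis unfolding label_rank_def .
qed

lemma label_rank_less_card:
  assumes "finite A" "x \<in> A"
  shows "label_rank \<pi> A x < card A"
  unfolding label_rank_def using assms by (intro psubset_card_mono) auto

lemma inj_on_label_rank:
  assumes "finite A" "inj_on \<pi> A"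
  shows "inj_on (label_rank \<pi> A) A"
proof (rule inj_onI)
  have mono: "label_rank \<pi> A x < label_rank \<pi> A y"
    if "x \<in> A" "y \<in> A" "\<pi> x < \<pi> y" for x y
    unfolding label_rank_def using assms(1) that by (intro psubset_card_mono) auto
  fix x y assume "x \<in> A" "y \<in> A" "label_rank \<pi> A x = label_rank \<pi> A y"
  then show "x = y"
    using mono[of x y] mono[of y x] assms(2) by (metis inj_onD linorder_neqE_nat less_irrefl)
qed

lemma subset_with_given_rank:
  assumes "finite A" "inj_on \<pi> A" "x \<in> A"
    and "p \<le> label_rank \<pi> A x" "q < card A - label_rank \<pi> A x"
  obtains F where "F \<subseteq> A" "x \<in> F" "card F = p + Suc q" "label_rank \<pi> F x = p"
proof -
  let ?L = "{y\<in>A. \<pi> y < \<pi> x}" and ?U = "{y\<in>A. \<pi> x < \<pi> y}"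
  have "p \<le> card ?L" using assms(4) unfolding label_rank_def .
  then obtain L where L: "L \<subseteq> ?L" "card L = p" "finite L" by (rule obtain_subset_with_card_n)
  have "q \<le> card ?U" using assms(5) label_rank_split[OF assms(1-3)] by simp
  then obtain U where U: "U \<subseteq> ?U" "card U = q" "finite U" by (rule obtain_subset_with_card_n)
  let ?F = "L \<union> insert x U"
  have "x \<notin> U" "L \<inter> insert x U = {}" using L U by force+
  then have "card ?F = p + Suc q"
    using L U by (simp add: card_Un_disjoint)
  moreover have "{y\<in>?F. \<pi> y < \<pi> x} = L" using L U by auto
  ultimately show thesis
    using that[of ?F] L U assms(3) unfolding label_rank_def by auto
qed

lemma card_extreme_ranks:
  assumes "finite A" "inj_on \<pi> A" "T \<subseteq> A" "m \<le> card A"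
    and extreme: "\<And>x. x \<in> T \<Longrightarrow> label_rank \<pi> A x < m - 1 \<or> card A - m < label_rank \<pi> A x"
  shows "card T \<le> 2 * (m - 1)"
proof -
  have "label_rank \<pi> A ` T \<subseteq> {..<m - 1} \<union> {card A - m<..<card A}"
    using extreme label_rank_less_card[OF assms(1)] assms(3) by fastforce
  then have "card (label_rank \<pi> A ` T) \<le> card ({..<m - 1} \<union> {card A - m<..<card A})"
    by (intro card_mono) auto
  also have "\<dots> \<le> card {..<m - 1} + card {card A - m<..<card A}" by (rule card_Un_le)
  also have "\<dots> = 2 * (m - 1)" using assms(4) by simp
  finally show ?thesis
    using inj_on_subset[OF inj_on_label_rank[OF assms(1,2)] assms(3)] by (simp add: card_image)
qed

lemma extend_to_card:
  assumes "finite A" "B \<subseteq> A" "card B \<le> k" "k \<le> card A"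
  obtains S where "B \<subseteq> S" "S \<subseteq> A" "card S = k"
proof -
  have "k - card B \<le> card (A - B)"
    using assms by (simp add: card_Diff_subset finite_subset)
  then obtain R where R: "R \<subseteq> A - B" "card R = k - card B" "finite R"
    by (rule obtain_subset_with_card_n)
  have "finite B" using assms(1,2) by (rule rev_finite_subset)
  then have "card (B \<union> R) = k"
    using R assms(3) by (subst card_Un_disjoint) auto
  then show thesis using that[of "B \<union> R"] R assms(2) by auto
qed

lemma facet_above:
  assumes "finite K" "H \<in> K"
  obtains F where "F \<in> facets K" "H \<subseteq> F"
proof -
  obtain F where "F \<in> K" "H \<subseteq> F" "\<forall>G\<in>K. F \<subseteq> G \<longrightarrow> F = G"
    using finite_has_maximal2[OF assms] by blast
  then have "F \<in> facets K" unfolding facets_def by auto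
  then show thesis using that \<open>H \<subseteq> F\<close> by blast
qed

lemma pure_face_of_top_card_is_facet:
  assumes K: "simplicial_complex n K" and pure: "pure_of_dim m K"
    and "G \<in> K" "card G = m"
  shows "G \<in> facets K"
proof -
  have KP: "K \<subseteq> Pow {1..n}" using K unfolding simplicial_complex_def by blast
  have "H = G" if H: "H \<in> K" "G \<subseteq> H" for H
  proof -
    obtain F where F: "F \<in> facets K" "H \<subseteq> F"
      using facet_above[OF finite_subset[OF KP] H(1)] by auto
    have "F \<subseteq> {1..n}" and "card F = m"
      using F KP pure unfolding facets_def pure_of_dim_def by auto
    have "finite F" using \<open>F \<subseteq> {1..n}\<close> by (rule finite_subset) simp
    then have "finite H" "card H \<le> m"
      using F(2) \<open>card F = m\<close> rev_finite_subset card_mono by metis+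
    then show "H = G" using card_seteq[OF _ H(2)] \<open>card G = m\<close> by simp
  qed
  then show ?thesis using \<open>G \<in> K\<close> unfolding facets_def by blast
qed

lemma facet_relabel:
  assumes inj: "inj_on \<pi> {1..n}" and K: "simplicial_complex n K" and F: "F \<in> facets K"
  shows "\<pi> ` F \<in> facets ((\<lambda>F. \<pi> ` F) ` K)"
proof -
  have KP: "K \<subseteq> Pow {1..n}" using K unfolding simplicial_complex_def by blast
  have "F \<in> K" using F unfolding facets_def by blast
  have "H0 = F" if "H0 \<in> K" "\<pi> ` F \<subseteq> \<pi> ` H0" for H0
  proof -
    have "F \<subseteq> {1..n}" "H0 \<subseteq> {1..n}" using that(1) \<open>F \<in> K\<close> KP by auto
    then have "F \<subseteq> H0"
      using that(2) inj_on_image_mem_iff[OF inj, of _ H0] by blast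
    then show ?thesis using F that(1) unfolding facets_def by blast
  qed
  then show ?thesis using \<open>F \<in> K\<close> unfolding facets_def by blast
qed

lemma closed_wrt_labelingD:
  assumes "closed_wrt_labeling m K" "F \<in> facets K" "G \<in> facets K"
    and "i < m" "sorted_list_of_set F ! i = sorted_list_of_set G ! i"
    and "H \<subseteq> F \<union> G" "card H = m"
  shows "H \<in> facets K"
  using assms unfolding closed_wrt_labeling_def by blast

lemma finite_clique_candidate:
  "\<Gamma> \<in> clique_candidates n m K \<Longrightarrow> finite \<Gamma>"
  unfolding clique_candidates_def using finite_subset by blast

lemma cliques_subset_candidates: "cliques n m K \<subseteq> clique_candidates n m K"
  unfolding cliques_def by blast

lemma finite_clique_candidates: "finite (clique_candidates n m K)"
proof (rule finite_subset)
  show "clique_candidates n m K \<subseteq> Pow {1..n}" unfolding clique_candidates_def by blast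
qed simp

lemma candidate_in_clique:
  assumes "\<Gamma> \<in> clique_candidates n m K"
  obtains D where "D \<in> cliques n m K" "\<Gamma> \<subseteq> D"
proof -
  obtain D where "D \<in> clique_candidates n m K" "\<Gamma> \<subseteq> D"
      "\<forall>E\<in>clique_candidates n m K. D \<subseteq> E \<longrightarrow> D = E"
    using finite_has_maximal2[OF finite_clique_candidates assms] by blast
  then have "D \<in> cliques n m K" unfolding cliques_def by auto
  then show thesis using that \<open>\<Gamma> \<subseteq> D\<close> by blast
qed

lemma clique_candidate_facet:
  assumes K: "simplicial_complex n K" and pure: "pure_of_dim m K"
    and "\<Gamma> \<in> clique_candidates n m K" "S \<subseteq> \<Gamma>" "card S = m"
  shows "S \<in> facets K"
  using assms(3-5) unfolding clique_candidates_def
  by (intro pure_face_of_top_card_is_facet[OF K pure]) auto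

lemma cliques_eq_if_share_two:
  assumes cond_i: "\<forall>A\<in>cliques n m K. \<forall>B\<in>cliques n m K. A \<noteq> B \<longrightarrow> card (A \<inter> B) \<le> 1"
    and A: "A \<in> cliques n m K" and B: "B \<in> cliques n m K"
    and "S \<subseteq> A \<inter> B" "2 \<le> card S"
  shows "A = B"
proof (rule ccontr)
  assume "A \<noteq> B"
  have "finite (A \<inter> B)"
    using finite_clique_candidate cliques_subset_candidates A by blast
  then have "card S \<le> card (A \<inter> B)" using assms(4) by (rule card_mono)
  then show False using cond_i A B \<open>2 \<le> card S\<close> \<open>A \<noteq> B\<close> by fastforce
qed

lemma closed_union_is_candidate:
  assumes K: "simplicial_complex n K" and pure: "pure_of_dim m K"
    and inj: "inj_on \<pi> {1..n}" and closed: "closed_wrt_labeling m ((\<lambda>F. \<pi> ` F) ` K)"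
    and F: "F \<in> facets K" and G: "G \<in> facets K"
    and common: "i < m" "sorted_list_of_set (\<pi> ` F) ! i = sorted_list_of_set (\<pi> ` G) ! i"
  shows "F \<union> G \<in> clique_candidates n m K"
proof -
  have KP: "K \<subseteq> Pow {1..n}" and down: "\<And>F G. F \<in> K \<Longrightarrow> G \<subseteq> F \<Longrightarrow> G \<in> K"
    using K unfolding simplicial_complex_def by blast+
  have FG: "F \<union> G \<subseteq> {1..n}" using F G KP unfolding facets_def by auto
  then have fin: "finite (F \<union> G)" by (rule finite_subset) simp
  have "card F = m" using F pure unfolding pure_of_dim_def by blast
  then have big: "m \<le> card (F \<union> G)" using card_mono[OF fin Un_upper1] by simp
  have "\<sigma> \<in> K" if \<sigma>: "\<sigma> \<subseteq> F \<union> G" "card \<sigma> \<le> m" for \<sigma>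
  proof -
    obtain S where S: "\<sigma> \<subseteq> S" "S \<subseteq> F \<union> G" "card S = m"
      using extend_to_card[OF fin \<sigma> big] by blast
    have S_labels: "S \<subseteq> {1..n}" using S(2) FG by blast
    have "card (\<pi> ` S) = m" using S(3) card_image[OF inj_on_subset[OF inj S_labels]] by simp
    moreover have "\<pi> ` S \<subseteq> \<pi> ` F \<union> \<pi> ` G" using S(2) by blast
    ultimately have "\<pi> ` S \<in> facets ((\<lambda>F. \<pi> ` F) ` K)"
      using closed_wrt_labelingD[OF closed facet_relabel[OF inj K F] facet_relabel[OF inj K G] common]
      by blast
    then obtain H where H: "H \<in> K" "\<pi> ` S = \<pi> ` H" unfolding facets_def by blast
    have "H \<subseteq> {1..n}" using H(1) KP by blast
    then have "S = H" using H(2) inj_on_image_eq_iff[OF inj S_labels] by blast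
    then show ?thesis using down H(1) S(1) by blast
  qed
  then show ?thesis unfolding clique_candidates_def using FG big by blast
qed

lemma card_meeting_le_card_shared:
  assumes "finite \<Gamma>"
    and no_triple: "\<And>A B. A \<in> C \<Longrightarrow> B \<in> C \<Longrightarrow> A \<noteq> B \<Longrightarrow> A \<noteq> \<Gamma> \<Longrightarrow> B \<noteq> \<Gamma> \<Longrightarrow> \<Gamma> \<inter> A \<inter> B = {}"
  shows "card {B\<in>C. B \<noteq> \<Gamma> \<and> \<Gamma> \<inter> B \<noteq> {}} \<le> card {x\<in>\<Gamma>. \<exists>B\<in>C. B \<noteq> \<Gamma> \<and> x \<in> B}"
proof -
  let ?N = "{B\<in>C. B \<noteq> \<Gamma> \<and> \<Gamma> \<inter> B \<noteq> {}}"
  define w where "w B = (SOME x. x \<in> \<Gamma> \<inter> B)" for B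
  have w: "w B \<in> \<Gamma> \<inter> B" if "B \<in> ?N" for B
  proof -
    have "\<exists>x. x \<in> \<Gamma> \<inter> B" using that by blast
    then show ?thesis unfolding w_def by (rule someI_ex)
  qed
  have "inj_on w ?N"
  proof (rule inj_onI)
    fix A B assume AB: "A \<in> ?N" "B \<in> ?N" "w A = w B"
    then have "w A \<in> \<Gamma> \<inter> A \<inter> B" using w[OF AB(1)] w[OF AB(2)] by simp
    then show "A = B" using no_triple AB(1,2) by blast
  qed
  moreover have "w ` ?N \<subseteq> {x\<in>\<Gamma>. \<exists>B\<in>C. B \<noteq> \<Gamma> \<and> x \<in> B}" using w by blast
  ultimately show ?thesis using assms(1) by (intro card_inj_on_le) auto
qed

lemma shared_vertex_has_extreme_rank:
  assumes K: "simplicial_complex n K" and pure: "pure_of_dim m K" and "2 \<le> m"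
    and inj: "inj_on \<pi> {1..n}" and closed: "closed_wrt_labeling m ((\<lambda>F. \<pi> ` F) ` K)"
    and cond_i: "\<forall>A\<in>cliques n m K. \<forall>B\<in>cliques n m K. A \<noteq> B \<longrightarrow> card (A \<inter> B) \<le> 1"
    and \<Gamma>: "\<Gamma> \<in> cliques n m K" and \<Gamma>': "\<Gamma>' \<in> cliques n m K" "\<Gamma>' \<noteq> \<Gamma>"
    and x: "x \<in> \<Gamma>" "x \<in> \<Gamma>'"
  shows "label_rank \<pi> \<Gamma> x < m - 1 \<or> card \<Gamma> - m < label_rank \<pi> \<Gamma> x"
proof (rule ccontr)
  assume "\<not> ?thesis"
  then have middle: "m - 1 \<le> label_rank \<pi> \<Gamma> x" "label_rank \<pi> \<Gamma> x \<le> card \<Gamma> - m" by auto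
  have cand: "\<Gamma> \<in> clique_candidates n m K" "\<Gamma>' \<in> clique_candidates n m K"
    using \<Gamma> \<Gamma>' cliques_subset_candidates by blast+
  have fin: "finite \<Gamma>" "finite \<Gamma>'" using cand by (auto intro: finite_clique_candidate)
  have labels: "\<Gamma> \<subseteq> {1..n}" "m \<le> card \<Gamma>" "m \<le> card \<Gamma>'" "\<Gamma>' \<subseteq> {1..n}"
    using cand unfolding clique_candidates_def by auto
  have inj_\<Gamma>: "inj_on \<pi> \<Gamma>" using inj labels(1) by (rule inj_on_subset)
  obtain G where G: "{x} \<subseteq> G" "G \<subseteq> \<Gamma>'" "card G = m"
    using extend_to_card[OF fin(2), of "{x}" m] x(2) labels(3) \<open>2 \<le> m\<close> by auto
  define p where "p = label_rank \<pi> G x"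
  have "finite G" using G(3) \<open>2 \<le> m\<close> by (intro card_ge_0_finite) simp
  then have "p < m" unfolding p_def using label_rank_less_card G by auto
  txt \<open>Since \<open>x\<close> is not near either end of \<open>\<Gamma>\<close>, some \<open>m\<close>-subset of \<open>\<Gamma>\<close> has \<open>x\<close> at position \<open>p\<close> too.\<close>
  have "p \<le> label_rank \<pi> \<Gamma> x" "m - 1 - p < card \<Gamma> - label_rank \<pi> \<Gamma> x"
    using middle \<open>p < m\<close> labels(2) by auto
  then obtain F where F: "F \<subseteq> \<Gamma>" "x \<in> F" "card F = p + Suc (m - 1 - p)" "label_rank \<pi> F x = p"
    by (rule subset_with_given_rank[OF fin(1) inj_\<Gamma> x(1)])
  have "card F = m" using F(3) \<open>p < m\<close> by simp
  have facets: "F \<in> facets K" "G \<in> facets K"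
    using clique_candidate_facet[OF K pure] cand F(1) G(2,3) \<open>card F = m\<close> by blast+
  have "finite F" using F(1) fin(1) by (rule finite_subset)
  have "inj_on \<pi> G" using inj G(2) labels(4) by (blast intro: inj_on_subset)
  then have "sorted_list_of_set (\<pi> ` G) ! p = \<pi> x"
    unfolding p_def using sorted_relabelled_nth_rank[OF \<open>finite G\<close>] G(1) by simp
  moreover have "sorted_list_of_set (\<pi> ` F) ! p = \<pi> x"
    using sorted_relabelled_nth_rank[OF \<open>finite F\<close> inj_on_subset[OF inj_\<Gamma> F(1)] F(2)] F(4) by simp
  ultimately have "sorted_list_of_set (\<pi> ` F) ! p = sorted_list_of_set (\<pi> ` G) ! p" by simp
  txt \<open>Closedness makes \<open>F \<union> G\<close> a clique candidate, whose clique must be both \<open>\<Gamma>\<close> and \<open>\<Gamma>'\<close>.\<close>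
  then have "F \<union> G \<in> clique_candidates n m K"
    using closed_union_is_candidate[OF K pure inj closed facets] \<open>p < m\<close> by blast
  then obtain D where D: "D \<in> cliques n m K" "F \<union> G \<subseteq> D" by (rule candidate_in_clique)
  have "D = \<Gamma>"
    using cliques_eq_if_share_two[OF cond_i D(1) \<Gamma>, of F] D(2) F(1) \<open>card F = m\<close> \<open>2 \<le> m\<close> by auto
  moreover have "D = \<Gamma>'"
    using cliques_eq_if_share_two[OF cond_i D(1) \<Gamma>'(1), of G] D(2) G(2,3) \<open>2 \<le> m\<close> by auto
  ultimately show False using \<Gamma>'(2) by simp
qed

theorem lemma3p1:
  fixes n m :: nat and K :: "nat set set" and \<Gamma> :: "nat set"
  assumes "simplicial_complex n K"
    and "pure_of_dim m K"
    and "m - 1 \<ge> 2"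
    and "closed_complex n m K"
    and cond_i: "\<forall>A\<in>cliques n m K. \<forall>B\<in>cliques n m K. A \<noteq> B \<longrightarrow> card (A \<inter> B) \<le> 1"
    and cond_ii: "\<forall>A\<in>cliques n m K. \<forall>B\<in>cliques n m K. \<forall>C\<in>cliques n m K.
                    A \<noteq> B \<and> A \<noteq> C \<and> B \<noteq> C \<longrightarrow> A \<inter> B \<inter> C = {}"
    and "\<Gamma> \<in> cliques n m K"
  shows "clique_graph_degree n m K \<Gamma> \<le> min (card \<Gamma>) (2 * (m - 1))"
proof -
  obtain \<pi> where "bij_betw \<pi> {1..n} {1..n}" and closed: "closed_wrt_labeling m ((\<lambda>F. \<pi> ` F) ` K)"
    using assms(4) unfolding closed_complex_def by blast
  then have inj: "inj_on \<pi> {1..n}" by (simp add: bij_betw_def)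
  have "\<Gamma> \<in> clique_candidates n m K" using assms(7) cliques_subset_candidates by blast
  then have fin: "finite \<Gamma>" and labels: "\<Gamma> \<subseteq> {1..n}" "m \<le> card \<Gamma>"
    by (auto intro: finite_clique_candidate simp: clique_candidates_def)
  define T where "T = {x\<in>\<Gamma>. \<exists>B\<in>cliques n m K. B \<noteq> \<Gamma> \<and> x \<in> B}"
  have "clique_graph_degree n m K \<Gamma> \<le> card T"
    unfolding clique_graph_degree_def T_def
    by (rule card_meeting_le_card_shared[OF fin]) (use cond_ii assms(7) in blast)
  moreover have "card T \<le> card \<Gamma>" unfolding T_def using fin by (intro card_mono) auto
  moreover have "card T \<le> 2 * (m - 1)"
  proof (rule card_extreme_ranks[OF fin inj_on_subset[OF inj labels(1)] _ labels(2)])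
    show "T \<subseteq> \<Gamma>" unfolding T_def by blast
    fix x assume "x \<in> T"
    then obtain B where "B \<in> cliques n m K" "B \<noteq> \<Gamma>" "x \<in> \<Gamma>" "x \<in> B" unfolding T_def by blast
    moreover have "2 \<le> m" using assms(3) by simp
    ultimately show "label_rank \<pi> \<Gamma> x < m - 1 \<or> card \<Gamma> - m < label_rank \<pi> \<Gamma> x"
      using shared_vertex_has_extreme_rank[OF assms(1,2) _ inj closed cond_i assms(7)] by blast
  qed
  ultimately show ?thesis by simp
qed

end
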